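(* For any frame $L$, $\overline{\mathrm{H}}(L)$ is order-isomorphic to $\overline{\mathrm{C}}(\mathfrak{B}(L))$.
   Context: $\mathbb{Q}$ is the rationals; $a^\ast$ is the pseudocomplement. $\mathfrak{B}(L)=\{a\in L\mid a=a^{\ast\ast}\}$ is the Booleanization of $L$, a complete Boolean algebra (a frame). The frame $\mathfrak{L}(\overline{\mathbb{IR}})$ is presented by generators $(r,\textsf{---})$, $(\textsf{---},s)$ ($r,s\in\mathbb{Q}$) subject to (r1) $(r,\textsf{---})\wedge(\textsf{---},s)=0$ whenever $r\ge s$; (r3) $(r,\textsf{---})=\bigvee_{s>r}(s,\textsf{---})$; (r4) $(\textsf{---},s)=\bigvee_{r<s}(\textsf{---},r)$. For a frame $M$, $\overline{\mathrm{IC}}(M)$ is the set of frame homomorphisms $\mathfrak{L}(\overline{\mathbb{IR}})\to M$, ordered by $f\le g$ iff $f(r,\textsf{---})\le g(r,\textsf{---})$ and $g(\textsf{---},s)\le f(\textsf{---},s)$ for all $r,s$; $\overline{\mathrm{C}}(M)$ is the subposet of those $f$ with $f(r,\textsf{---})\vee f(\textsf{---},s)=1$ whenever $r<s$; $\overline{\mathrm{H}}(M)$ is the subposet of those $f$ with $f(r,\textsf{---})^\ast\le f(\textsf{---},s)$ and $f(\textsf{---},s)^\ast\le f(r,\textsf{---})$ whenever $r<s$. *)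

theory Defs
  imports Main "HOL.Rat"
begin

definition frame_law :: "'a::complete_lattice itself \<Rightarrow> bool" where
  "frame_law _ \<longleftrightarrow> (\<forall>(a::'a) S. inf a (Sup S) = Sup ((\<lambda>s. inf a s) ` S))"

definition pcomp :: "'a::complete_lattice \<Rightarrow> 'a" where
  "pcomp a = Sup {x. inf x a = bot}"

definition booleanization :: "'a::complete_lattice set" where
  "booleanization = {a. a = pcomp (pcomp a)}"

text \<open>For M = UNIV this is Sup;
  for M = B(L) it is the join of the frame B(L).\<close>
definition is_join_in :: "'a::complete_lattice set \<Rightarrow> 'a set \<Rightarrow> 'a \<Rightarrow> bool" where
  "is_join_in M S x \<longleftrightarrow> x \<in> M \<and> (\<forall>s\<in>S. s \<le> x) \<and> (\<forall>y\<in>M. (\<forall>s\<in>S. s \<le> y) \<longrightarrow> x \<le> y)"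

text \<open>A frame homomorphism f : L(IR-bar) \<rightarrow> M is determined by (and, by the universal
  property of the presentation, the same thing as) an assignment of the generators,
  up r = f(r,---), down s = f(---,s), respecting relations (r1), (r3), (r4),
  where 0 and joins are interpreted in the frame M.  M is given as a subset of a
  complete lattice (closed under finite meets, containing bot and top) with the
  induced order.\<close>
type_synonym 'a gen_assign = "(rat \<Rightarrow> 'a) \<times> (rat \<Rightarrow> 'a)"

definition ICbar :: "'a::complete_lattice set \<Rightarrow> 'a gen_assign set" where
  "ICbar M = {(up, down).
      (\<forall>r. up r \<in> M) \<and> (\<forall>s. down s \<in> M) \<and>
      (\<forall>r s. s \<le> r \<longrightarrow> inf (up r) (down s) = bot) \<and>
      (\<forall>r. is_join_in M {up s | s. s > r} (up r)) \<and>
      (\<forall>s. is_join_in M {down r | r. r < s} (down s))}"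

definition ic_le :: "'a::order gen_assign \<Rightarrow> 'a gen_assign \<Rightarrow> bool" where
  "ic_le f g \<longleftrightarrow> (\<forall>r. fst f r \<le> fst g r) \<and> (\<forall>s. snd g s \<le> snd f s)"

definition Cbar :: "'a::complete_lattice set \<Rightarrow> 'a gen_assign set" where
  "Cbar M = {f \<in> ICbar M. \<forall>r s. r < s \<longrightarrow> is_join_in M {fst f r, snd f s} top}"

definition Hbar :: "'a::complete_lattice gen_assign set" where
  "Hbar = {f \<in> ICbar UNIV. \<forall>r s. r < s \<longrightarrow>
             pcomp (fst f r) \<le> snd f s \<and> pcomp (snd f s) \<le> fst f r}"

definition order_isomorphic :: "'a::order gen_assign set \<Rightarrow> 'a gen_assign set \<Rightarrow> bool" where
  "order_isomorphic A B \<longleftrightarrow> (\<exists>\<phi>. bij_betw \<phi> A B \<and>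
      (\<forall>f\<in>A. \<forall>g\<in>A. ic_le f g \<longleftrightarrow> ic_le (\<phi> f) (\<phi> g)))"

end

theory Submission
  imports Defs
begin

(* Write \<not>a for the pseudocomplement a*.  Double pseudocomplementation turns an element
   of H-bar(L) into one of C-bar(B(L)): the relations survive because a \<mapsto> \<not>\<not>a preserves
   disjointness and \<not>\<not>\<Squnion>{\<not>\<not>x} = \<not>\<not>\<Squnion>{x}, and the H-bar condition becomes the C-bar
   condition because a \<squnion> b = 1 in B(L) iff \<not>a \<sqinter> \<not>b = 0.  Nothing is lost: (r1) and
   the H-bar condition squeeze f(r,---) between \<Squnion>{f(s,---) | s > r} and
   \<Squnion>{\<not>f(---,t) | t > r}, so f(r,---) = \<Squnion>{\<not>\<not>\<not>f(---,t) | t > r} is recovered from \<not>\<not>f.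
   Conversely these formulas send any g in C-bar(B(L)) into H-bar(L), by density of the
   rationals. *)

definition pp_assign :: "'a::complete_lattice gen_assign \<Rightarrow> 'a gen_assign" where
  "pp_assign f = (\<lambda>r. pcomp (pcomp (fst f r)), \<lambda>s. pcomp (pcomp (snd f s)))"

definition swap_pcomp_assign :: "'a::complete_lattice gen_assign \<Rightarrow> 'a gen_assign" where
  "swap_pcomp_assign f =
     (\<lambda>r. Sup {pcomp (snd f t) |t. r < t}, \<lambda>s. Sup {pcomp (fst f t) |t. t < s})"

lemma order_isomorphicI:
  assumes "\<And>f. f \<in> A \<Longrightarrow> \<phi> f \<in> B" and "\<And>g. g \<in> B \<Longrightarrow> \<psi> g \<in> A"
    and "\<And>f. f \<in> A \<Longrightarrow> \<psi> (\<phi> f) = f" and "\<And>g. g \<in> B \<Longrightarrow> \<phi> (\<psi> g) = g"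
    and "\<And>f g. ic_le f g \<Longrightarrow> ic_le (\<phi> f) (\<phi> g)"
    and "\<And>f g. ic_le f g \<Longrightarrow> ic_le (\<psi> f) (\<psi> g)"
  shows "order_isomorphic A B"
  unfolding order_isomorphic_def
proof (intro exI conjI ballI)
  show "bij_betw \<phi> A B"
    by (rule bij_betw_byWitness[where f' = \<psi>]) (use assms in auto)
  show "ic_le f g \<longleftrightarrow> ic_le (\<phi> f) (\<phi> g)" if "f \<in> A" "g \<in> A" for f g
    using assms(3,5,6) that by metis
qed

lemma Sup_Sup_greater_dense:
  fixes f :: "'b::dense_linorder \<Rightarrow> 'a::complete_lattice"
  shows "Sup {Sup {f t |t. s < t} |s. r < s} = Sup {f t |t. r < t}"
proof (rule antisym)
  show "Sup {Sup {f t |t. s < t} |s. r < s} \<le> Sup {f t |t. r < t}"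
    by (rule Sup_least) (auto intro!: Sup_subset_mono)
  show "Sup {f t |t. r < t} \<le> Sup {Sup {f t |t. s < t} |s. r < s}"
  proof (rule Sup_least, clarify)
    fix t assume "r < t"
    then obtain m where "r < m" "m < t" using dense by blast
    then show "f t \<le> Sup {Sup {f t |t. s < t} |s. r < s}"
      by (blast intro: Sup_upper2[of "Sup {f t |t. m < t}"] Sup_upper)
  qed
qed

lemma Sup_Sup_less_dense:
  fixes f :: "'b::dense_linorder \<Rightarrow> 'a::complete_lattice"
  shows "Sup {Sup {f t |t. t < s} |s. s < r} = Sup {f t |t. t < r}"
proof (rule antisym)
  show "Sup {Sup {f t |t. t < s} |s. s < r} \<le> Sup {f t |t. t < r}"
    by (rule Sup_least) (auto intro!: Sup_subset_mono)
  show "Sup {f t |t. t < r} \<le> Sup {Sup {f t |t. t < s} |s. s < r}"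
  proof (rule Sup_least, clarify)
    fix t assume "t < r"
    then obtain m where "t < m" "m < r" using dense by blast
    then show "f t \<le> Sup {Sup {f t |t. t < s} |s. s < r}"
      by (blast intro: Sup_upper2[of "Sup {f t |t. t < m}"] Sup_upper)
  qed
qed

lemma is_join_in_UNIV_iff: "is_join_in UNIV S x \<longleftrightarrow> x = Sup S"
  unfolding is_join_in_def by (auto intro: Sup_upper Sup_least antisym)

lemma is_join_in_unique: "is_join_in M S x \<Longrightarrow> is_join_in M S y \<Longrightarrow> x = y"
  unfolding is_join_in_def by (meson antisym)

lemma Hbar_iff:
  "(u, d) \<in> Hbar \<longleftrightarrow>
     (\<forall>r s. s \<le> r \<longrightarrow> inf (u r) (d s) = bot) \<and>
     (\<forall>r. u r = Sup {u s |s. r < s}) \<and> (\<forall>s. d s = Sup {d r |r. r < s}) \<and>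
     (\<forall>r s. r < s \<longrightarrow> pcomp (u r) \<le> d s \<and> pcomp (d s) \<le> u r)"
  by (simp add: Hbar_def ICbar_def is_join_in_UNIV_iff)

lemma pcomp_antimono:
  assumes "a \<le> b"
  shows "pcomp b \<le> pcomp a"
proof -
  have "inf x a = bot" if "inf x b = bot" for x
  proof -
    have "inf x a \<le> inf x b"
      using assms by (rule inf_mono[OF order_refl])
    with that show ?thesis
      by (simp add: bot_unique)
  qed
  then show ?thesis
    unfolding pcomp_def by (intro Sup_subset_mono) auto
qed

lemma pp_assign_mono: "ic_le f g \<Longrightarrow> ic_le (pp_assign f) (pp_assign g)"
  by (simp add: ic_le_def pp_assign_def pcomp_antimono)

lemma swap_pcomp_assign_mono: "ic_le f g \<Longrightarrow> ic_le (swap_pcomp_assign f) (swap_pcomp_assign g)"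
  unfolding ic_le_def swap_pcomp_assign_def
  by (auto intro!: Sup_mono) (blast intro: pcomp_antimono)+

context
  assumes frame: "frame_law TYPE('a::complete_lattice)"
begin

lemma inf_Sup_distrib: "inf (a::'a) (Sup S) = (SUP s\<in>S. inf a s)"
  using frame unfolding frame_law_def by blast

lemma le_pcomp_iff: "(x::'a) \<le> pcomp a \<longleftrightarrow> inf x a = bot"
proof
  assume "x \<le> pcomp a"
  then have "inf x a \<le> inf a (pcomp a)"
    by (simp add: inf_commute le_infI2)
  also have "\<dots> = (SUP y\<in>{y. inf y a = bot}. inf a y)"
    unfolding pcomp_def by (rule inf_Sup_distrib)
  also have "\<dots> = bot"
    by (simp add: inf_commute)
  finally show "inf x a = bot"
    by (simp add: bot_unique)
next
  assume "inf x a = bot"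
  then show "x \<le> pcomp a"
    unfolding pcomp_def by (simp add: Sup_upper)
qed

lemma inf_pcomp_self: "inf (a::'a) (pcomp a) = bot"
  using le_pcomp_iff[of "pcomp a" a] by (simp add: inf_commute)

lemma le_pcomp_pcomp: "(a::'a) \<le> pcomp (pcomp a)"
  by (simp add: le_pcomp_iff inf_pcomp_self)

lemma pcomp_pcomp_pcomp: "pcomp (pcomp (pcomp (a::'a))) = pcomp a"
  by (simp add: antisym pcomp_antimono le_pcomp_pcomp)

lemma pcomp_pcomp_mono: "(a::'a) \<le> b \<Longrightarrow> pcomp (pcomp a) \<le> pcomp (pcomp b)"
  by (simp add: pcomp_antimono)

lemma pcomp_sup: "pcomp (sup (a::'a) b) = inf (pcomp a) (pcomp b)"
proof -
  have "inf x (sup a b) = sup (inf x a) (inf x b)" for x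
    using inf_Sup_distrib[of x "{a, b}"] by simp
  then have "x \<le> pcomp (sup a b) \<longleftrightarrow> x \<le> inf (pcomp a) (pcomp b)" for x
    by (simp add: le_pcomp_iff)
  then show ?thesis
    by (meson antisym order_refl)
qed

lemma pcomp_pcomp_eq_top_iff: "pcomp (pcomp (a::'a)) = top \<longleftrightarrow> pcomp a = bot"
proof
  assume "pcomp (pcomp a) = top"
  then have "pcomp a = pcomp (top::'a)"
    using pcomp_pcomp_pcomp[of a] by simp
  also have "\<dots> = bot"
    using inf_pcomp_self[of top] by simp
  finally show "pcomp a = bot" .
qed (simp add: le_pcomp_iff top_unique[symmetric])

lemma inf_pcomp_pcomp_eq_bot:
  assumes "inf (a::'a) b = bot"
  shows "inf (pcomp (pcomp a)) (pcomp (pcomp b)) = bot"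
proof -
  have "b \<le> pcomp a"
    using assms by (simp add: le_pcomp_iff inf_commute)
  then have "pcomp (pcomp b) \<le> pcomp (pcomp (pcomp a))"
    by (rule pcomp_pcomp_mono)
  then show ?thesis
    by (simp add: le_pcomp_iff inf_commute)
qed

lemma pcomp_pcomp_Sup_pcomp_pcomp:
  "pcomp (pcomp (Sup {pcomp (pcomp (f s)) |s. P s})) = pcomp (pcomp (Sup {f s :: 'a |s. P s}))"
proof (rule antisym)
  have "Sup {pcomp (pcomp (f s)) |s. P s} \<le> pcomp (pcomp (Sup {f s |s. P s}))"
    by (rule Sup_least) (auto intro!: pcomp_pcomp_mono Sup_upper)
  then have "pcomp (pcomp (Sup {pcomp (pcomp (f s)) |s. P s}))
      \<le> pcomp (pcomp (pcomp (pcomp (Sup {f s |s. P s}))))"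
    by (rule pcomp_pcomp_mono)
  then show "pcomp (pcomp (Sup {pcomp (pcomp (f s)) |s. P s})) \<le> pcomp (pcomp (Sup {f s |s. P s}))"
    by (simp only: pcomp_pcomp_pcomp)
  have "Sup {f s |s. P s} \<le> Sup {pcomp (pcomp (f s)) |s. P s}"
    by (rule Sup_mono) (auto intro: le_pcomp_pcomp)
  then show "pcomp (pcomp (Sup {f s |s. P s})) \<le> pcomp (pcomp (Sup {pcomp (pcomp (f s)) |s. P s}))"
    by (rule pcomp_pcomp_mono)
qed

lemma pcomp_pcomp_mem_booleanization: "pcomp (pcomp (a::'a)) \<in> booleanization"
  unfolding booleanization_def by (simp add: pcomp_pcomp_pcomp)

lemma is_join_in_booleanization_iff:
  "is_join_in booleanization S x \<longleftrightarrow> x = pcomp (pcomp (Sup (S::'a set)))"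
proof -
  have "is_join_in booleanization S (pcomp (pcomp (Sup S)))"
    unfolding is_join_in_def
  proof (intro conjI ballI impI)
    show "pcomp (pcomp (Sup S)) \<in> booleanization"
      by (rule pcomp_pcomp_mem_booleanization)
    show "s \<le> pcomp (pcomp (Sup S))" if "s \<in> S" for s
      using that by (meson Sup_upper order_trans le_pcomp_pcomp)
    show "pcomp (pcomp (Sup S)) \<le> y" if "y \<in> booleanization" "\<forall>s\<in>S. s \<le> y" for y
      using that pcomp_pcomp_mono[of "Sup S" y] unfolding booleanization_def
      by (simp add: Sup_least)
  qed
  then show ?thesis
    using is_join_in_unique by blast
qed

lemma is_join_in_booleanization_top_iff:
  "is_join_in booleanization {a, b} (top::'a) \<longleftrightarrow> inf (pcomp a) (pcomp b) = bot"
  using pcomp_pcomp_eq_top_iff[of "sup a b"]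
  by (auto simp: is_join_in_booleanization_iff pcomp_sup)

lemma Cbar_booleanization_iff:
  "(U, D) \<in> Cbar (booleanization :: 'a set) \<longleftrightarrow>
     (\<forall>r. U r \<in> booleanization) \<and> (\<forall>s. D s \<in> booleanization) \<and>
     (\<forall>r s. s \<le> r \<longrightarrow> inf (U r) (D s) = bot) \<and>
     (\<forall>r. U r = pcomp (pcomp (Sup {U s |s. r < s}))) \<and>
     (\<forall>s. D s = pcomp (pcomp (Sup {D r |r. r < s}))) \<and>
     (\<forall>r s. r < s \<longrightarrow> inf (pcomp (U r)) (pcomp (D s)) = bot)"
  unfolding Cbar_def ICbar_def is_join_in_booleanization_top_iff
  by (simp add: is_join_in_booleanization_iff)

lemma ICbar_le_pcomp:
  assumes "(u, d) \<in> ICbar (M :: 'a set)"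
  shows "u t \<le> pcomp (d t)" and "d t \<le> pcomp (u t)"
  using assms by (auto simp: ICbar_def le_pcomp_iff inf_commute)

lemma Cbar_booleanization_regular:
  assumes "(U, D) \<in> Cbar (booleanization :: 'a set)"
  shows "pcomp (pcomp (U r)) = U r" and "pcomp (pcomp (D s)) = D s"
proof -
  have "U r \<in> booleanization" "D s \<in> booleanization"
    using assms by (simp_all add: Cbar_def ICbar_def)
  then show "pcomp (pcomp (U r)) = U r" and "pcomp (pcomp (D s)) = D s"
    unfolding booleanization_def by simp_all
qed

lemma Cbar_booleanization_Sup_pcomp_le:
  assumes "(U, D) \<in> Cbar (booleanization :: 'a set)"
  shows "Sup {pcomp (D t) |t. r < t} \<le> U r" and "Sup {pcomp (U t) |t. t < s} \<le> D s"
proof -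
  from assms have cover: "\<And>r s. r < s \<Longrightarrow> inf (pcomp (U r)) (pcomp (D s)) = bot"
    unfolding Cbar_booleanization_iff by blast
  have "pcomp (D t) \<le> U r" "pcomp (U r) \<le> D t" if "r < t" for r t
    using cover[OF that] le_pcomp_iff[of "pcomp (D t)" "pcomp (U r)"]
      le_pcomp_iff[of "pcomp (U r)" "pcomp (D t)"]
    by (simp_all add: Cbar_booleanization_regular[OF assms] inf_commute)
  then show "Sup {pcomp (D t) |t. r < t} \<le> U r" and "Sup {pcomp (U t) |t. t < s} \<le> D s"
    by (auto intro!: Sup_least)
qed

lemma Hbar_up_eq_Sup_pcomp_down:
  assumes "(u, d) \<in> (Hbar :: 'a gen_assign set)"
  shows "u r = Sup {pcomp (d t) |t. r < t}"
proof (rule antisym)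
  have "(u, d) \<in> ICbar UNIV"
    using assms by (simp add: Hbar_def)
  then have "Sup {u s |s. r < s} \<le> Sup {pcomp (d t) |t. r < t}"
    by (intro Sup_mono) (blast dest: ICbar_le_pcomp)
  moreover have "u r = Sup {u s |s. r < s}"
    using assms unfolding Hbar_iff by blast
  ultimately show "u r \<le> Sup {pcomp (d t) |t. r < t}"
    by simp
  show "Sup {pcomp (d t) |t. r < t} \<le> u r"
    using assms unfolding Hbar_iff by (blast intro: Sup_least)
qed

lemma Hbar_down_eq_Sup_pcomp_up:
  assumes "(u, d) \<in> (Hbar :: 'a gen_assign set)"
  shows "d s = Sup {pcomp (u t) |t. t < s}"
proof (rule antisym)
  have "(u, d) \<in> ICbar UNIV"
    using assms by (simp add: Hbar_def)
  then have "Sup {d r |r. r < s} \<le> Sup {pcomp (u t) |t. t < s}"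
    by (intro Sup_mono) (blast dest: ICbar_le_pcomp)
  moreover have "d s = Sup {d r |r. r < s}"
    using assms unfolding Hbar_iff by blast
  ultimately show "d s \<le> Sup {pcomp (u t) |t. t < s}"
    by simp
  show "Sup {pcomp (u t) |t. t < s} \<le> d s"
    using assms unfolding Hbar_iff by (blast intro: Sup_least)
qed

lemma pp_assign_mem_Cbar:
  assumes "(u, d) \<in> (Hbar :: 'a gen_assign set)"
  shows "pp_assign (u, d) \<in> Cbar booleanization"
proof -
  from assms have disjoint: "\<And>r s. s \<le> r \<Longrightarrow> inf (u r) (d s) = bot"
    and up_cont: "\<And>r. u r = Sup {u s |s. r < s}"
    and down_cont: "\<And>s. d s = Sup {d r |r. r < s}"
    and cover: "\<And>r s. r < s \<Longrightarrow> pcomp (u r) \<le> d s"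
    unfolding Hbar_iff by blast+
  have "inf (pcomp (u r)) (pcomp (d s)) = bot" if "r < s" for r s
    using order_trans[OF cover[OF that] le_pcomp_pcomp] by (simp add: le_pcomp_iff)
  moreover have "pcomp (pcomp (u r)) = pcomp (pcomp (Sup {pcomp (pcomp (u s)) |s. r < s}))" for r
    by (simp only: pcomp_pcomp_Sup_pcomp_pcomp flip: up_cont)
  moreover have "pcomp (pcomp (d s)) = pcomp (pcomp (Sup {pcomp (pcomp (d r)) |r. r < s}))" for s
    by (simp only: pcomp_pcomp_Sup_pcomp_pcomp flip: down_cont)
  ultimately show ?thesis
    unfolding pp_assign_def fst_conv snd_conv Cbar_booleanization_iff pcomp_pcomp_pcomp
    by (blast intro: pcomp_pcomp_mem_booleanization inf_pcomp_pcomp_eq_bot disjoint)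
qed

lemma swap_pcomp_assign_mem_Hbar:
  assumes "(U, D) \<in> Cbar (booleanization :: 'a set)"
  shows "swap_pcomp_assign (U, D) \<in> Hbar"
proof -
  define u where "u r = Sup {pcomp (D t) |t. r < t}" for r
  define d where "d s = Sup {pcomp (U t) |t. t < s}" for s
  have U_le: "U t \<le> pcomp (D t)" and D_le: "D t \<le> pcomp (U t)" for t
    using assms unfolding Cbar_def by (blast dest: ICbar_le_pcomp)+
  have disjoint: "inf (u r) (d s) = bot" if "s \<le> r" for r s
  proof -
    have "inf (u r) (d s) \<le> inf (U r) (D s)"
      using Cbar_booleanization_Sup_pcomp_le[OF assms] unfolding u_def d_def
      by (blast intro: inf_mono)
    moreover have "inf (U r) (D s) = bot"
      using assms that unfolding Cbar_booleanization_iff by blast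
    ultimately show ?thesis
      by (simp add: bot_unique)
  qed
  have cover: "pcomp (u r) \<le> d s \<and> pcomp (d s) \<le> u r" if "r < s" for r s
  proof -
    obtain m where "r < m" "m < s"
      using dense[OF \<open>r < s\<close>] by blast
    then have below: "pcomp (D m) \<le> u r" "pcomp (U m) \<le> d s"
      unfolding u_def d_def by (blast intro: Sup_upper)+
    then have "U m \<le> u r" "D m \<le> d s"
      using U_le D_le order_trans by blast+
    then have "pcomp (u r) \<le> pcomp (U m)" "pcomp (d s) \<le> pcomp (D m)"
      by (simp_all add: pcomp_antimono)
    with below show ?thesis
      by (blast intro: order_trans)
  qed
  have up_cont: "u r = Sup {u s |s. r < s}" for r
    unfolding u_def by (rule Sup_Sup_greater_dense[symmetric])
  have down_cont: "d s = Sup {d r |r. r < s}" for s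
    unfolding d_def by (rule Sup_Sup_less_dense[symmetric])
  have "(u, d) \<in> Hbar"
    unfolding Hbar_iff using disjoint cover up_cont down_cont by blast
  moreover have "swap_pcomp_assign (U, D) = (u, d)"
    by (simp add: swap_pcomp_assign_def u_def [abs_def] d_def [abs_def])
  ultimately show ?thesis
    by simp
qed

lemma swap_pcomp_assign_pp_assign:
  assumes "(u, d) \<in> (Hbar :: 'a gen_assign set)"
  shows "swap_pcomp_assign (pp_assign (u, d)) = (u, d)"
proof -
  have "(\<lambda>r. Sup {pcomp (d t) |t. r < t}) = u"
    using Hbar_up_eq_Sup_pcomp_down[OF assms] by (simp add: fun_eq_iff)
  moreover have "(\<lambda>s. Sup {pcomp (u t) |t. t < s}) = d"
    using Hbar_down_eq_Sup_pcomp_up[OF assms] by (simp add: fun_eq_iff)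
  ultimately show ?thesis
    by (simp add: swap_pcomp_assign_def pp_assign_def pcomp_pcomp_pcomp)
qed

lemma pp_assign_swap_pcomp_assign:
  assumes "(U, D) \<in> Cbar (booleanization :: 'a set)"
  shows "pp_assign (swap_pcomp_assign (U, D)) = (U, D)"
proof -
  from assms have up_reg: "\<And>r. U r = pcomp (pcomp (Sup {U s |s. r < s}))"
    and down_reg: "\<And>s. D s = pcomp (pcomp (Sup {D r |r. r < s}))"
    unfolding Cbar_booleanization_iff by blast+
  have U_le: "U t \<le> pcomp (D t)" and D_le: "D t \<le> pcomp (U t)" for t
    using assms unfolding Cbar_def by (blast dest: ICbar_le_pcomp)+
  have "pcomp (pcomp (Sup {pcomp (D t) |t. r < t})) = U r" for r
  proof (rule antisym)
    show "pcomp (pcomp (Sup {pcomp (D t) |t. r < t})) \<le> U r"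
      using pcomp_pcomp_mono[OF Cbar_booleanization_Sup_pcomp_le(1)[OF assms]] by (simp add: Cbar_booleanization_regular[OF assms])
    have "Sup {U s |s. r < s} \<le> Sup {pcomp (D t) |t. r < t}"
      using U_le by (intro Sup_mono) blast
    then show "U r \<le> pcomp (pcomp (Sup {pcomp (D t) |t. r < t}))"
      by (subst up_reg) (rule pcomp_pcomp_mono)
  qed
  moreover have "pcomp (pcomp (Sup {pcomp (U t) |t. t < s})) = D s" for s
  proof (rule antisym)
    show "pcomp (pcomp (Sup {pcomp (U t) |t. t < s})) \<le> D s"
      using pcomp_pcomp_mono[OF Cbar_booleanization_Sup_pcomp_le(2)[OF assms]] by (simp add: Cbar_booleanization_regular[OF assms])
    have "Sup {D r |r. r < s} \<le> Sup {pcomp (U t) |t. t < s}"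
      using D_le by (intro Sup_mono) blast
    then show "D s \<le> pcomp (pcomp (Sup {pcomp (U t) |t. t < s}))"
      by (subst down_reg) (rule pcomp_pcomp_mono)
  qed
  ultimately show ?thesis
    by (simp add: pp_assign_def swap_pcomp_assign_def fun_eq_iff)
qed

end

theorem proposition3p9:
  assumes "frame_law TYPE('a::complete_lattice)"
  shows "order_isomorphic (Hbar :: 'a gen_assign set) (Cbar (booleanization :: 'a set))"
proof (rule order_isomorphicI)
  fix f :: "'a gen_assign"
  assume "f \<in> Hbar"
  then show "pp_assign f \<in> Cbar booleanization" and "swap_pcomp_assign (pp_assign f) = f"
    using pp_assign_mem_Cbar[OF assms] swap_pcomp_assign_pp_assign[OF assms]
    by (metis prod.exhaust)+
next
  fix g :: "'a gen_assign"
  assume "g \<in> Cbar booleanization"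
  then show "swap_pcomp_assign g \<in> Hbar" and "pp_assign (swap_pcomp_assign g) = g"
    using swap_pcomp_assign_mem_Hbar[OF assms] pp_assign_swap_pcomp_assign[OF assms]
    by (metis prod.exhaust)+
qed (fact pp_assign_mono swap_pcomp_assign_mono)+

end
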